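(* Let $n\ge 1$, let $G=P_n$ be the path with vertex set $\{1,\dots,n\}$ and edges $\{i,i+1\}$ for $1\le i<n$, and let $C\subseteq V(G)$ be such that no vertex of $V(G)\setminus C$ is isolated. If $C$ is a good configuration for $G$, then $\gamma_{\rm gr}(G;C)=n$; otherwise $\gamma_{\rm gr}(G;C)=n-1$.
   Context: $N\langle v\rangle = N[v]$ (closed neighborhood) if $v\in C$ and $N\langle v\rangle=N(v)$ (open neighborhood) if $v\notin C$. A sequence $(v_1,\dots,v_k)$ of distinct vertices is legal if $N\langle v_i\rangle\setminus\bigcup_{j<i}N\langle v_j\rangle\neq\emptyset$ for all $i\ge 2$, and dominating if $\bigcup_j N\langle v_j\rangle=V$; $\gamma_{\rm gr}(G;C)$ is the maximum length of a legal dominating sequence. Good configuration (defined for a path with vertices $a_1,\dots,a_n$ in order, applied to $C\cap\{a_1,\dots,a_n\}$; isolated vertices outside $C$ are allowed in this definition): $C$ is a good configuration for the path if (i) $n=1$ and $a_1\in C$; or (ii) $n=2$ and $\{a_1,a_2\}\not\subseteq C$; or (iii) $n\ge 3$ and either $a_1\notin C$ and $C$ is a good configuration for the subpath $(a_3,\dots,a_n)$, or $a_n\notin C$ and $C$ is a good configuration for the subpath $(a_1,\dots,a_{n-2})$. *)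

theory Defs
  imports Main
begin

definition open_nbhd :: "'a set \<Rightarrow> ('a \<Rightarrow> 'a \<Rightarrow> bool) \<Rightarrow> 'a \<Rightarrow> 'a set" where
  "open_nbhd V E v = {u \<in> V. E v u}"

definition closed_nbhd :: "'a set \<Rightarrow> ('a \<Rightarrow> 'a \<Rightarrow> bool) \<Rightarrow> 'a \<Rightarrow> 'a set" where
  "closed_nbhd V E v = insert v (open_nbhd V E v)"

definition nbhdC :: "'a set \<Rightarrow> ('a \<Rightarrow> 'a \<Rightarrow> bool) \<Rightarrow> 'a set \<Rightarrow> 'a \<Rightarrow> 'a set" where
  "nbhdC V E C v = (if v \<in> C then closed_nbhd V E v else open_nbhd V E v)"

definition legal_seq :: "'a set \<Rightarrow> ('a \<Rightarrow> 'a \<Rightarrow> bool) \<Rightarrow> 'a set \<Rightarrow> 'a list \<Rightarrow> bool" where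
  "legal_seq V E C vs \<longleftrightarrow> distinct vs \<and> set vs \<subseteq> V \<and>
     (\<forall>i. 0 < i \<and> i < length vs \<longrightarrow>
        nbhdC V E C (vs ! i) - (\<Union>j<i. nbhdC V E C (vs ! j)) \<noteq> {})"

definition dominating_seq :: "'a set \<Rightarrow> ('a \<Rightarrow> 'a \<Rightarrow> bool) \<Rightarrow> 'a set \<Rightarrow> 'a list \<Rightarrow> bool" where
  "dominating_seq V E C vs \<longleftrightarrow> (\<Union>v\<in>set vs. nbhdC V E C v) = V"

definition gamma_gr :: "'a set \<Rightarrow> ('a \<Rightarrow> 'a \<Rightarrow> bool) \<Rightarrow> 'a set \<Rightarrow> nat" where
  "gamma_gr V E C = Max {length vs | vs. legal_seq V E C vs \<and> dominating_seq V E C vs}"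

definition path_vertices :: "nat \<Rightarrow> nat set" where
  "path_vertices n = {1..n}"

definition path_adj :: "nat \<Rightarrow> nat \<Rightarrow> bool" where
  "path_adj u v \<longleftrightarrow> u = v + 1 \<or> v = u + 1"

text \<open>good C a m: C is a good configuration for the path with vertices a, a+1, ..., a+m-1
  (i.e. a_1 = a, ..., a_m = a+m-1).\<close>
fun good_config :: "nat set \<Rightarrow> nat \<Rightarrow> nat \<Rightarrow> bool" where
  "good_config C a 0 = False"
| "good_config C a (Suc 0) = (a \<in> C)"
| "good_config C a (Suc (Suc 0)) = (\<not> {a, a + 1} \<subseteq> C)"
| "good_config C a (Suc (Suc (Suc m))) =
     ((a \<notin> C \<and> good_config C (a + 2) (Suc m)) \<or>
      (a + m + 2 \<notin> C \<and> good_config C a (Suc m)))"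

end

theory Submission
  imports Defs
begin

text \<open>
  If all n vertices form a legal sequence (a legal ordering), the sequence is automatically
  dominating, since every vertex newly dominates a different vertex; so the Grundy domination
  number is n exactly when a legal ordering exists.

  The last vertex v of a legal ordering has a private neighbour x, lying in no other N\<langle>w\<rangle>.
  On a path this forces x to be an end vertex outside C whose only neighbour is v. Such a pendant
  pair can be deleted from a legal ordering, and conversely a legal ordering of the remaining
  vertices extends by putting x first and v last. Hence a path has a legal ordering iff one of its
  ends lies outside C and the path shortened by two vertices at that end has one, which is the
  recursion defining good configurations.

  If C is not good, the sequence 1, ..., n - 1, in which i newly dominates i + 1, is legal and
  dominating.
\<close>

fun legal_after :: "('a \<Rightarrow> 'a set) \<Rightarrow> 'a set \<Rightarrow> 'a list \<Rightarrow> bool" where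
  "legal_after N B [] \<longleftrightarrow> True"
| "legal_after N B (v # vs) \<longleftrightarrow> N v - B \<noteq> {} \<and> legal_after N (B \<union> N v) vs"

lemma legal_after_append:
  "legal_after N B (xs @ ys) \<longleftrightarrow> legal_after N B xs \<and> legal_after N (B \<union> \<Union>(N ` set xs)) ys"
  by (induction xs arbitrary: B) (auto simp: Un_assoc)

lemma legal_after_decomp:
  "legal_after N B (ys @ w # zs) \<Longrightarrow> N w - (B \<union> \<Union>(N ` set ys)) \<noteq> {}"
  by (simp add: legal_after_append)

lemma legal_after_iff_nth:
  "legal_after N B vs \<longleftrightarrow> (\<forall>i<length vs. N (vs ! i) - (B \<union> (\<Union>j<i. N (vs ! j))) \<noteq> {})"
proof (induction vs arbitrary: B)
  case Nil
  show ?case by simp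
next
  case (Cons v vs)
  have "(\<Union>j<Suc i. N ((v # vs) ! j)) = N v \<union> (\<Union>j<i. N (vs ! j))" for i
    by (simp add: lessThan_Suc_eq_insert_0 image_image)
  then show ?case
    using Cons.IH by (simp add: All_less_Suc2 Un_assoc)
qed

lemma legal_after_antimono:
  "B' \<subseteq> B \<Longrightarrow> legal_after N B vs \<Longrightarrow> legal_after N B' vs"
proof (induction vs arbitrary: B B')
  case Nil
  show ?case by simp
next
  case (Cons v vs)
  then show ?case
    using Cons.IH[of "B' \<union> N v" "B \<union> N v"] by auto
qed

lemma legal_after_filter:
  assumes "legal_after N B vs"
    and "\<And>w. w \<in> set vs \<Longrightarrow> P w \<Longrightarrow> N' w = N w \<inter> W"
    and "\<And>ys w zs. vs = ys @ w # zs \<Longrightarrow> P w \<Longrightarrow> N w - (B \<union> \<Union>(N ` set ys)) \<subseteq> W"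
  shows "legal_after N' B (filter P vs)"
  using assms
proof (induction vs arbitrary: B)
  case Nil
  show ?case by simp
next
  case (Cons v vs)
  have "legal_after N' (B \<union> N v) (filter P vs)"
  proof (rule Cons.IH)
    fix ys w zs assume "vs = ys @ w # zs" "P w"
    then show "N w - (B \<union> N v \<union> \<Union>(N ` set ys)) \<subseteq> W"
      using Cons.prems(3)[of "v # ys" w zs] by (simp add: Un_assoc)
  qed (use Cons.prems in auto)
  moreover have "N' v - B \<noteq> {}" if "P v"
    using Cons.prems(1) Cons.prems(2)[of v] Cons.prems(3)[of "[]" v vs] that by auto
  moreover have "N' v \<subseteq> N v" if "P v"
    using Cons.prems(2)[of v] that by auto
  ultimately show ?case
    by (auto intro: legal_after_antimono[rotated])
qed

lemma legal_after_unrestrict: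
  assumes "legal_after N' (B \<inter> W) vs" and "\<And>w. w \<in> set vs \<Longrightarrow> N' w = N w \<inter> W"
  shows "legal_after N B vs"
  using assms
proof (induction vs arbitrary: B)
  case Nil
  show ?case by simp
next
  case (Cons v vs)
  have N'v: "N' v = N v \<inter> W"
    using Cons.prems(2) by simp
  have "N v - B \<noteq> {}"
    using Cons.prems(1) N'v by auto
  moreover have "legal_after N (B \<union> N v) vs"
  proof (rule Cons.IH)
    have "(B \<union> N v) \<inter> W = B \<inter> W \<union> N' v"
      using N'v by auto
    then show "legal_after N' ((B \<union> N v) \<inter> W) vs"
      using Cons.prems(1) by simp
  qed (use Cons.prems(2) in simp)
  ultimately show ?case
    by simp
qed

lemma card_legal_after:
  assumes "\<And>v. finite (N v)" "finite B" "legal_after N B vs"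
  shows "card B + length vs \<le> card (B \<union> \<Union>(N ` set vs))"
  using assms(2,3)
proof (induction vs arbitrary: B)
  case Nil
  show ?case by simp
next
  case (Cons v vs)
  have "card B < card (B \<union> N v)"
    using Cons.prems assms(1) by (intro psubset_card_mono) auto
  moreover have "card (B \<union> N v) + length vs \<le> card (B \<union> N v \<union> \<Union>(N ` set vs))"
    using Cons assms(1) by simp
  ultimately show ?case by (simp add: Un_assoc)
qed

definition legal_ordering :: "('a \<Rightarrow> 'a set) \<Rightarrow> 'a set \<Rightarrow> 'a list \<Rightarrow> bool" where
  "legal_ordering N A vs \<longleftrightarrow> distinct vs \<and> set vs = A \<and> legal_after N {} vs"

lemma legal_ordering_private_neighbour:
  assumes "legal_ordering N A vs" "A \<noteq> {}"
  obtains v x where "v \<in> A" "x \<in> N v" "\<And>w. w \<in> A \<Longrightarrow> w \<noteq> v \<Longrightarrow> x \<notin> N w"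
proof -
  have vs: "distinct vs" "set vs = A" "legal_after N {} vs"
    using assms(1) by (simp_all add: legal_ordering_def)
  then obtain xs v where vs_eq: "vs = xs @ [v]"
    using assms(2) by (cases vs rule: rev_exhaust) auto
  then obtain x where x: "x \<in> N v" "x \<notin> \<Union>(N ` set xs)"
    using vs(3) legal_after_decomp[of N "{}" xs v "[]"] by auto
  have "set xs = A - {v}" "v \<in> A"
    using vs(1,2) vs_eq by auto
  with x show thesis
    by (intro that[of v x]) auto
qed

lemma legal_ordering_pendant_iff:
  assumes "x \<in> A" "v \<in> A" "x \<noteq> v" "N x = {v}" "x \<in> N v"
    and "\<And>w. w \<in> A \<Longrightarrow> x \<in> N w \<Longrightarrow> w = v"
    and "\<And>w. w \<in> A - {x, v} \<Longrightarrow> N' w = N w - {x, v}"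
  shows "(\<exists>vs. legal_ordering N A vs) \<longleftrightarrow> (\<exists>vs. legal_ordering N' (A - {x, v}) vs)"
proof
  assume "\<exists>vs. legal_ordering N A vs"
  then obtain vs where vs: "distinct vs" "set vs = A" "legal_after N {} vs"
    by (auto simp: legal_ordering_def)
  have new_outside: "N w - ({} \<union> \<Union>(N ` set ys)) \<subseteq> - {x, v}"
    if split: "vs = ys @ w # zs" and w: "w \<notin> {x, v}" for ys w zs
  proof -
    have "x \<notin> N w"
      using assms(6)[of w] vs(2) split w by auto
    moreover have "x \<in> set ys \<or> x \<in> set zs"
      using vs(2) assms(1) split w by auto
    then have "v \<in> \<Union>(N ` set ys)" if "v \<in> N w"
    proof
      assume "x \<in> set ys"
      then show ?thesis
        using assms(4) by auto
    next
      assume "x \<in> set zs"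
      then obtain p q where "zs = p @ x # q"
        by (auto dest: split_list)
      then have "N x - ({} \<union> \<Union>(N ` set (ys @ w # p))) \<noteq> {}"
        using legal_after_decomp[of N "{}" "ys @ w # p" x q] vs(3) split by simp
      then show ?thesis
        using assms(4) that by auto
    qed
    ultimately show ?thesis
      by auto
  qed
  have "legal_after N' {} (filter (\<lambda>w. w \<notin> {x, v}) vs)"
  proof (rule legal_after_filter[where W = "- {x, v}"])
    show "N' w = N w \<inter> - {x, v}" if "w \<in> set vs" "w \<notin> {x, v}" for w
      using assms(7)[of w] vs(2) that by auto
  qed (use vs(3) new_outside in simp_all)
  moreover have "distinct (filter (\<lambda>w. w \<notin> {x, v}) vs)" "set (filter (\<lambda>w. w \<notin> {x, v}) vs) = A - {x, v}"
    using vs(1,2) by auto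
  ultimately show "\<exists>vs. legal_ordering N' (A - {x, v}) vs"
    unfolding legal_ordering_def by blast
next
  assume "\<exists>vs. legal_ordering N' (A - {x, v}) vs"
  then obtain vs where vs: "distinct vs" "set vs = A - {x, v}" "legal_after N' {} vs"
    by (auto simp: legal_ordering_def)
  have "legal_after N {v} vs"
  proof (rule legal_after_unrestrict[where W = "- {x, v}" and N' = N'])
    show "N' w = N w \<inter> - {x, v}" if "w \<in> set vs" for w
      using assms(7)[of w] vs(2) that by auto
  qed (use vs(3) in simp)
  moreover have "x \<notin> \<Union>(N ` set vs)"
    using assms(6) vs(2) by auto
  ultimately have "legal_after N {} (x # vs @ [v])"
    using assms(3,4,5) by (auto simp: legal_after_append)
  moreover have "distinct (x # vs @ [v])" "set (x # vs @ [v]) = A"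
    using vs(1,2) assms(1-3) by auto
  ultimately show "\<exists>vs. legal_ordering N A vs"
    unfolding legal_ordering_def by blast
qed

lemma nbhdC_subset: "v \<in> V \<Longrightarrow> nbhdC V E C v \<subseteq> V"
  by (auto simp: nbhdC_def closed_nbhd_def open_nbhd_def)

lemma finite_nbhdC: "finite V \<Longrightarrow> finite (nbhdC V E C v)"
  by (rule finite_subset[of _ "insert v V"]) (auto simp: nbhdC_def closed_nbhd_def open_nbhd_def)

lemma legal_seq_iff_legal_after:
  assumes "\<forall>v\<in>set vs. nbhdC V E C v \<noteq> {}"
  shows "legal_seq V E C vs \<longleftrightarrow> distinct vs \<and> set vs \<subseteq> V \<and> legal_after (nbhdC V E C) {} vs"
proof -
  let ?new = "\<lambda>i. nbhdC V E C (vs ! i) - (\<Union>j<i. nbhdC V E C (vs ! j)) \<noteq> {}"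
  have "?new 0" if "0 < length vs"
    using assms that by simp
  then have "(\<forall>i. 0 < i \<and> i < length vs \<longrightarrow> ?new i) \<longleftrightarrow> (\<forall>i<length vs. ?new i)"
    by (metis gr_zeroI)
  then show ?thesis
    unfolding legal_seq_def legal_after_iff_nth by simp
qed

lemma legal_seq_length_le: "finite V \<Longrightarrow> legal_seq V E C vs \<Longrightarrow> length vs \<le> card V"
  unfolding legal_seq_def by (metis card_mono distinct_card)

lemma legal_seq_card_iff_legal_ordering:
  assumes "finite V" "\<forall>v\<in>V. nbhdC V E C v \<noteq> {}"
  shows "legal_seq V E C vs \<and> length vs = card V \<longleftrightarrow> legal_ordering (nbhdC V E C) V vs"
proof
  assume vs: "legal_seq V E C vs \<and> length vs = card V"
  then have "distinct vs" "set vs \<subseteq> V"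
    unfolding legal_seq_def by simp_all
  then have "set vs = V"
    using card_subset_eq[OF assms(1)] vs by (simp add: distinct_card)
  moreover have "\<forall>v\<in>set vs. nbhdC V E C v \<noteq> {}"
    using \<open>set vs = V\<close> assms(2) by simp
  ultimately show "legal_ordering (nbhdC V E C) V vs"
    using vs legal_seq_iff_legal_after[of vs V E C] by (simp add: legal_ordering_def)
next
  assume "legal_ordering (nbhdC V E C) V vs"
  then have vs: "distinct vs" "set vs = V" "legal_after (nbhdC V E C) {} vs"
    by (simp_all add: legal_ordering_def)
  then have "length vs = card V"
    by (metis distinct_card)
  then show "legal_seq V E C vs \<and> length vs = card V"
    using vs assms(2) legal_seq_iff_legal_after[of vs V E C] by simp
qed

lemma dominating_seq_if_legal_ordering:
  assumes "finite V" "legal_ordering (nbhdC V E C) V vs"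
  shows "dominating_seq V E C vs"
proof -
  let ?U = "\<Union>(nbhdC V E C ` set vs)"
  have vs: "distinct vs" "set vs = V" "legal_after (nbhdC V E C) {} vs"
    using assms(2) by (simp_all add: legal_ordering_def)
  have "?U \<subseteq> V"
    using vs(2) nbhdC_subset by (intro UN_least) simp
  moreover have "card V \<le> card ?U"
    using card_legal_after[OF finite_nbhdC[OF assms(1)] _ vs(3)] distinct_card[OF vs(1)] vs(2) by simp
  ultimately have "?U = V"
    using card_seteq[OF assms(1)] by simp
  then show ?thesis
    by (simp add: dominating_seq_def)
qed

lemma gamma_gr_eqI:
  assumes "legal_seq V E C vs" "dominating_seq V E C vs" "length vs = k"
    and "\<And>ws. legal_seq V E C ws \<Longrightarrow> dominating_seq V E C ws \<Longrightarrow> length ws \<le> k"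
  shows "gamma_gr V E C = k"
proof -
  let ?L = "{length vs | vs. legal_seq V E C vs \<and> dominating_seq V E C vs}"
  have bound: "l \<le> k" if "l \<in> ?L" for l
    using that assms(4) by auto
  then have "finite ?L"
    by (meson finite_atMost finite_subset subsetI atMost_iff)
  moreover have "k \<in> ?L"
    using assms(1-3) by auto
  ultimately show ?thesis
    unfolding gamma_gr_def using bound by (intro Max_eqI)
qed

lemma gamma_gr_eq_card:
  assumes "finite V" "\<forall>v\<in>V. nbhdC V E C v \<noteq> {}" "legal_ordering (nbhdC V E C) V vs"
  shows "gamma_gr V E C = card V"
proof (rule gamma_gr_eqI)
  show "legal_seq V E C vs" "length vs = card V"
    using legal_seq_card_iff_legal_ordering[OF assms(1,2), of vs] assms(3) by simp_all
  show "dominating_seq V E C vs"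
    using assms(1,3) by (rule dominating_seq_if_legal_ordering)
  show "length ws \<le> card V" if "legal_seq V E C ws" "dominating_seq V E C ws" for ws
    using assms(1) that(1) by (rule legal_seq_length_le)
qed

lemma gamma_gr_eq_card_minus_1:
  assumes "finite V" "\<forall>v\<in>V. nbhdC V E C v \<noteq> {}" "\<nexists>vs. legal_ordering (nbhdC V E C) V vs"
    and "legal_seq V E C vs" "dominating_seq V E C vs" "length vs = card V - 1"
  shows "gamma_gr V E C = card V - 1"
proof (rule gamma_gr_eqI[OF assms(4-6)])
  fix ws assume "legal_seq V E C ws"
  then show "length ws \<le> card V - 1"
    using legal_seq_length_le[OF assms(1)] legal_seq_card_iff_legal_ordering[OF assms(1,2), of ws] assms(3)
    by fastforce
qed

definition path_nbhd :: "nat \<Rightarrow> nat \<Rightarrow> nat set \<Rightarrow> nat \<Rightarrow> nat set" where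
  "path_nbhd a m C = nbhdC {a..<a+m} path_adj C"

lemma mem_path_nbhd:
  "u \<in> path_nbhd a m C v \<longleftrightarrow> a \<le> u \<and> u < a + m \<and> (u = v + 1 \<or> v = u + 1) \<or> u = v \<and> v \<in> C"
  by (auto simp: path_nbhd_def nbhdC_def closed_nbhd_def open_nbhd_def path_adj_def)

lemma nbhdC_path_vertices: "nbhdC (path_vertices n) path_adj C = path_nbhd 1 n C"
  by (auto simp: path_nbhd_def path_vertices_def atLeastLessThanSuc_atLeastAtMost)

lemma path_private_neighbour_endpoint:
  assumes "v \<in> {a..<a+m+2}" "x \<in> path_nbhd a (Suc (Suc m)) C v"
    and unshared: "\<And>w. w \<in> {a..<a+m+2} \<Longrightarrow> w \<noteq> v \<Longrightarrow> x \<notin> path_nbhd a (Suc (Suc m)) C w"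
  shows "x \<notin> C \<and> (x = a \<or> x = a + m + 1)"
proof -
  have x: "a \<le> x" "x < a + m + 2"
    using assms(1,2) by (auto simp: mem_path_nbhd)
  have neighbour: "w = v" if "a \<le> w" "w < a + m + 2" "x = w + 1 \<or> w = x + 1" for w
    using unshared[of w] x that by (auto simp: mem_path_nbhd)
  have "x \<notin> C"
  proof
    assume "x \<in> C"
    then have "x = v"
      using unshared[of x] x by (auto simp: mem_path_nbhd)
    moreover have "0 < x \<and> x - 1 = v \<or> x + 1 = v"
      using neighbour[of "x - 1"] neighbour[of "x + 1"] x by (cases "a < x") auto
    ultimately show False
      by auto
  qed
  moreover have "x = a \<or> x = a + m + 1"
  proof (rule ccontr)
    assume "\<not> (x = a \<or> x = a + m + 1)"
    then have "a < x" "x < a + m + 1"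
      using x by auto
    then have "x - 1 = v" "x + 1 = v"
      using neighbour[of "x - 1"] neighbour[of "x + 1"] by simp_all
    then show False
      by simp
  qed
  ultimately show ?thesis
    by blast
qed

lemma legal_ordering_path_iff:
  "(\<exists>vs. legal_ordering (path_nbhd a (Suc (Suc m)) C) {a..<a+m+2} vs) \<longleftrightarrow>
     a \<notin> C \<and> (\<exists>vs. legal_ordering (path_nbhd (a+2) m C) {a+2..<a+2+m} vs) \<or>
     a + m + 1 \<notin> C \<and> (\<exists>vs. legal_ordering (path_nbhd a m C) {a..<a+m} vs)"
  (is "?big \<longleftrightarrow> _")
proof -
  let ?N = "path_nbhd a (Suc (Suc m)) C" and ?A = "{a..<a+m+2}"
  have left: "?big \<longleftrightarrow> (\<exists>vs. legal_ordering (path_nbhd (a+2) m C) (?A - {a, a + 1}) vs)"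
    if "a \<notin> C"
  proof (rule legal_ordering_pendant_iff)
    show "?N a = {a + 1}"
      using that by (auto simp: mem_path_nbhd)
    show "w = a + 1" if "w \<in> ?A" "a \<in> ?N w" for w
      using that \<open>a \<notin> C\<close> by (auto simp: mem_path_nbhd)
    show "path_nbhd (a+2) m C w = ?N w - {a, a + 1}" if "w \<in> ?A - {a, a + 1}" for w
      using that by (auto simp: mem_path_nbhd)
  qed (simp_all add: mem_path_nbhd)
  have right: "?big \<longleftrightarrow> (\<exists>vs. legal_ordering (path_nbhd a m C) (?A - {a + m + 1, a + m}) vs)"
    if "a + m + 1 \<notin> C"
  proof (rule legal_ordering_pendant_iff)
    show "?N (a + m + 1) = {a + m}"
      using that by (auto simp: mem_path_nbhd)
    show "w = a + m" if "w \<in> ?A" "a + m + 1 \<in> ?N w" for w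
      using that \<open>a + m + 1 \<notin> C\<close> by (auto simp: mem_path_nbhd)
    show "path_nbhd a m C w = ?N w - {a + m + 1, a + m}" if "w \<in> ?A - {a + m + 1, a + m}" for w
      using that by (auto simp: mem_path_nbhd)
  qed (simp_all add: mem_path_nbhd)
  have "?A - {a, a + 1} = {a+2..<a+2+m}" "?A - {a + m + 1, a + m} = {a..<a+m}"
    by auto
  moreover have "a \<notin> C \<or> a + m + 1 \<notin> C" if ?big
  proof -
    from that obtain vs where "legal_ordering ?N ?A vs" ..
    then obtain v x where "v \<in> ?A" "x \<in> ?N v" "\<And>w. w \<in> ?A \<Longrightarrow> w \<noteq> v \<Longrightarrow> x \<notin> ?N w"
      by (rule legal_ordering_private_neighbour) auto
    then have "x \<notin> C \<and> (x = a \<or> x = a + m + 1)"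
      by (rule path_private_neighbour_endpoint)
    then show ?thesis
      by auto
  qed
  ultimately show ?thesis
    using left right by auto
qed

text \<open>Counting the empty path as good turns clause (ii) of the definition into the case m = 0
  of clause (iii).\<close>

lemma good_config_Suc_Suc:
  "good_config C a (Suc (Suc m)) \<longleftrightarrow>
     a \<notin> C \<and> (m = 0 \<or> good_config C (a+2) m) \<or> a + m + 1 \<notin> C \<and> (m = 0 \<or> good_config C a m)"
  by (cases m) auto

lemma good_config_iff_legal_ordering:
  "m = 0 \<or> good_config C a m \<longleftrightarrow> (\<exists>vs. legal_ordering (path_nbhd a m C) {a..<a+m} vs)"
proof (induction m arbitrary: a rule: nat_induct2)
  case 0
  have "legal_ordering (path_nbhd a 0 C) {} []"
    by (simp add: legal_ordering_def)
  then show ?case by auto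
next
  case 1
  have "legal_ordering (path_nbhd a 1 C) {a} vs \<longleftrightarrow> vs = [a] \<and> a \<in> C" for vs
  proof -
    have "distinct vs \<and> set vs = {a} \<longleftrightarrow> vs = [a]"
      by (cases vs) (auto simp: subset_singleton_iff)
    moreover have "path_nbhd a 1 C a \<noteq> {} \<longleftrightarrow> a \<in> C"
      by (auto simp: mem_path_nbhd)
    ultimately show ?thesis
      by (auto simp: legal_ordering_def)
  qed
  then show ?case by auto
next
  case (step m)
  then show ?case
    using legal_ordering_path_iff[of a m C] good_config_Suc_Suc[of C a m] by simp
qed

lemma legal_seq_upt_path: "legal_seq (path_vertices n) path_adj C [1..<n]"
  unfolding legal_seq_def nbhdC_path_vertices
proof (intro conjI allI impI)
  fix i assume i: "0 < i \<and> i < length [1..<n]"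
  have "i + 2 \<in> path_nbhd 1 n C ([1..<n] ! i)"
    using i by (auto simp: mem_path_nbhd)
  moreover have "i + 2 \<notin> path_nbhd 1 n C ([1..<n] ! j)" if "j < i" for j
    using i that by (auto simp: mem_path_nbhd)
  ultimately show "path_nbhd 1 n C ([1..<n] ! i) - (\<Union>j<i. path_nbhd 1 n C ([1..<n] ! j)) \<noteq> {}"
    by blast
qed (auto simp: path_vertices_def)

lemma dominating_seq_upt_path:
  assumes "2 \<le> n" "n = 2 \<Longrightarrow> 1 \<in> C"
  shows "dominating_seq (path_vertices n) path_adj C [1..<n]"
proof -
  have "\<exists>v\<in>{1..<n}. u \<in> path_nbhd 1 n C v" if "u \<in> {1..<1+n}" for u
  proof (cases "u = 1")
    case True
    then show ?thesis
      using assms by (cases "n = 2") (auto simp: mem_path_nbhd intro: bexI[of _ 2])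
  next
    case False
    then show ?thesis
      using that by (auto simp: mem_path_nbhd intro!: bexI[of _ "u - 1"])
  qed
  moreover have "path_nbhd 1 n C v \<subseteq> {1..<1+n}" if "v \<in> {1..<n}" for v
    using that by (auto simp: mem_path_nbhd)
  ultimately have "(\<Union>v\<in>{1..<n}. path_nbhd 1 n C v) = {1..<1+n}"
    by blast
  then show ?thesis
    unfolding dominating_seq_def nbhdC_path_vertices
    by (simp add: path_vertices_def atLeastLessThanSuc_atLeastAtMost)
qed

theorem corollary2:
  fixes n :: nat and C :: "nat set"
  assumes "n \<ge> 1"
    and "C \<subseteq> path_vertices n"
    and "\<forall>v \<in> path_vertices n - C. open_nbhd (path_vertices n) path_adj v \<noteq> {}"
  shows "gamma_gr (path_vertices n) path_adj C = (if good_config C 1 n then n else n - 1)"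
proof -
  let ?V = "path_vertices n" and ?N = "nbhdC (path_vertices n) path_adj C"
  have V: "finite ?V" "card ?V = n"
    by (simp_all add: path_vertices_def)
  have nonempty: "\<forall>v\<in>?V. ?N v \<noteq> {}"
    using assms(3) by (auto simp: nbhdC_def closed_nbhd_def)
  have good_iff: "good_config C 1 n \<longleftrightarrow> (\<exists>vs. legal_ordering ?N ?V vs)"
    unfolding nbhdC_path_vertices using good_config_iff_legal_ordering[of n C 1] assms(1)
    by (simp add: path_vertices_def atLeastLessThanSuc_atLeastAtMost)
  show ?thesis
  proof (cases "good_config C 1 n")
    case True
    then show ?thesis
      using good_iff gamma_gr_eq_card[OF V(1) nonempty] V(2) by auto
  next
    case False
    have "1 \<notin> open_nbhd (path_vertices 1) path_adj 1"
      by (simp add: open_nbhd_def path_adj_def)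
    then have "n \<noteq> 1"
      using False assms(3) by (auto simp: path_vertices_def open_nbhd_def)
    then have "2 \<le> n" "n = 2 \<Longrightarrow> 1 \<in> C"
      using False assms(1) by (auto simp: numeral_2_eq_2)
    then have "gamma_gr ?V path_adj C = n - 1"
      using gamma_gr_eq_card_minus_1[OF V(1) nonempty _ legal_seq_upt_path dominating_seq_upt_path]
        False good_iff V(2) by simp
    then show ?thesis
      using False by simp
  qed
qed

end
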